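(* Let $d\ge 3$, let $K$ be an algebraically closed field of characteristic $p$ with $p=0$ or $p>d$, let $X_d\subset\mathbb{P}^3(K)$ be a smooth surface of degree $d$, and let $L\subset X_d$ be a line. Then the set $$\{P\in L:\ \mathbb{T}_PX_d\cap V_P \text{ does not consist of two distinct lines}\}$$ is finite.
   Context: Let $f$ be a homogeneous defining polynomial of $X_d$. For $P=(p_0:\dots:p_3)$ and $j=1,2$ put $\mathfrak t_P^{(j)}(z):=\sum_{0\le i_1,\dots,i_j\le 3}\frac{\partial^j f}{\partial w_{i_1}\cdots\partial w_{i_j}}(p_0,\dots,p_3)\,z_{i_1}\cdots z_{i_j}$. Then $\mathbb{T}_PX_d=V(\mathfrak t_P^{(1)})\subset\mathbb{P}^3$ is the projective tangent plane of $X_d$ at $P$, and $V_P=V(\mathfrak t_P^{(2)})\subset\mathbb{P}^3$ is the Hessian quadric of $X_d$ at $P$; the intersection is taken set-theoretically. *)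

theory Defs
  imports "HOL-Computational_Algebra.Polynomial" "HOL-Library.Numeral_Type"
begin

text \<open>Homogeneous polynomials in the four variables w_0..w_3 are represented by their
coefficient functions on exponent vectors (index type 4).  Points of K^4 are functions
4 => K; points of P^3 are nonzero vectors up to nonzero scalars.\<close>

type_synonym 'a mpoly4 = "(4 \<Rightarrow> nat) \<Rightarrow> 'a"

definition homogeneous4 :: "nat \<Rightarrow> 'a::zero mpoly4 \<Rightarrow> bool" where
  "homogeneous4 d f \<longleftrightarrow> (\<forall>\<alpha>. f \<alpha> \<noteq> 0 \<longrightarrow> (\<Sum>i\<in>UNIV. \<alpha> i) = d)"

definition eval4 :: "'a::comm_semiring_1 mpoly4 \<Rightarrow> (4 \<Rightarrow> 'a) \<Rightarrow> 'a" where
  "eval4 f x = (\<Sum>\<alpha>\<in>{\<alpha>. f \<alpha> \<noteq> 0}. f \<alpha> * (\<Prod>i\<in>UNIV. x i ^ \<alpha> i))"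

definition pderiv4 :: "4 \<Rightarrow> 'a::comm_semiring_1 mpoly4 \<Rightarrow> 'a mpoly4" where
  "pderiv4 i f = (\<lambda>\<alpha>. of_nat (\<alpha> i + 1) * f (\<alpha>(i := \<alpha> i + 1)))"

definition tangent_form :: "'a::comm_semiring_1 mpoly4 \<Rightarrow> (4 \<Rightarrow> 'a) \<Rightarrow> (4 \<Rightarrow> 'a) \<Rightarrow> 'a" where
  "tangent_form f P z = (\<Sum>i\<in>UNIV. eval4 (pderiv4 i f) P * z i)"

definition hessian_form :: "'a::comm_semiring_1 mpoly4 \<Rightarrow> (4 \<Rightarrow> 'a) \<Rightarrow> (4 \<Rightarrow> 'a) \<Rightarrow> 'a" where
  "hessian_form f P z =
     (\<Sum>i\<in>UNIV. \<Sum>j\<in>UNIV. eval4 (pderiv4 j (pderiv4 i f)) P * z i * z j)"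

definition nonzero4 :: "(4 \<Rightarrow> 'a::zero) \<Rightarrow> bool" where
  "nonzero4 v \<longleftrightarrow> (\<exists>i. v i \<noteq> 0)"

definition proj_pt :: "(4 \<Rightarrow> 'a::field) \<Rightarrow> (4 \<Rightarrow> 'a) set" where
  "proj_pt v = {(\<lambda>i. c * v i) | c. c \<noteq> 0}"

definition lin_indep2 :: "(4 \<Rightarrow> 'a::field) \<Rightarrow> (4 \<Rightarrow> 'a) \<Rightarrow> bool" where
  "lin_indep2 a b \<longleftrightarrow> (\<forall>s t. (\<forall>i. s * a i + t * b i = 0) \<longrightarrow> s = 0 \<and> t = 0)"

definition line_cone :: "(4 \<Rightarrow> 'a::field) \<Rightarrow> (4 \<Rightarrow> 'a) \<Rightarrow> (4 \<Rightarrow> 'a) set" where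
  "line_cone a b = {z. nonzero4 z \<and> (\<exists>s t. z = (\<lambda>i. s * a i + t * b i))}"

definition smooth_surface :: "'a::field mpoly4 \<Rightarrow> bool" where
  "smooth_surface f \<longleftrightarrow>
     (\<forall>P. nonzero4 P \<and> eval4 f P = 0 \<longrightarrow> (\<exists>i. eval4 (pderiv4 i f) P \<noteq> 0))"

text \<open>T_P X \<inter> V_P (as a subset of P^3, via its cone) consists of two distinct lines.\<close>
definition two_distinct_lines :: "'a::field mpoly4 \<Rightarrow> (4 \<Rightarrow> 'a) \<Rightarrow> bool" where
  "two_distinct_lines f P \<longleftrightarrow>
     (\<exists>a1 b1 a2 b2. lin_indep2 a1 b1 \<and> lin_indep2 a2 b2 \<and>
        line_cone a1 b1 \<noteq> line_cone a2 b2 \<and>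
        {z. nonzero4 z \<and> tangent_form f P z = 0 \<and> hessian_form f P z = 0}
          = line_cone a1 b1 \<union> line_cone a2 b2)"

end

theory Submission
  imports Defs "HOL-Analysis.Cartesian_Space" "HOL-Number_Theory.Cong"
begin

text \<open>Parametrise the line as \<open>a + x b\<close>. At each such point \<open>P\<close> the tangent plane contains the
  line, and by Euler's formula the Hessian quadric contains it too and is singular at \<open>P\<close>
  relative to the tangent plane. Hence the plane section is the line plus a second line through
  \<open>P\<close>, unless the Hessian pairs \<open>b\<close> trivially with the whole tangent plane. Pairing \<open>b\<close> with
  \<open>f\<^sub>i e\<^sub>j - f\<^sub>j e\<^sub>i\<close> gives the Wronskian of the restrictions of \<open>\<partial>\<^sub>if\<close> and \<open>\<partial>\<^sub>jf\<close> to the line.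
  If all these Wronskians vanished identically, the restricted partial derivatives would be
  proportional (this needs \<open>p = 0\<close> or \<open>p > d\<close>) and would have a common root, a singular point of
  the surface. So some Wronskian is a nonzero polynomial, and only its roots and the point \<open>b\<close>
  can be exceptional.\<close>

lemma sum_fun_upd_nat:
  "(\<Sum>j\<in>UNIV. ((\<alpha>::'n::finite \<Rightarrow> nat)(i := x)) j) = (\<Sum>j\<in>UNIV. \<alpha> j) - \<alpha> i + x"
proof -
  have "(\<Sum>j\<in>UNIV. (\<alpha>(i := x)) j) = x + (\<Sum>j\<in>UNIV-{i}. \<alpha> j)"
    by (simp add: sum.remove[of UNIV i])
  moreover have "(\<Sum>j\<in>UNIV. \<alpha> j) = \<alpha> i + (\<Sum>j\<in>UNIV-{i}. \<alpha> j)"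
    by (simp add: sum.remove[of UNIV i])
  ultimately show ?thesis by simp
qed

lemma homogeneous4_finite_support:
  assumes "homogeneous4 m g"
  shows "finite {\<alpha>. g \<alpha> \<noteq> 0}"
proof (rule finite_subset)
  show "{\<alpha>. g \<alpha> \<noteq> 0} \<subseteq> PiE UNIV (\<lambda>_. {..m})"
  proof
    fix \<alpha> assume "\<alpha> \<in> {\<alpha>. g \<alpha> \<noteq> 0}"
    then have "(\<Sum>i\<in>UNIV. \<alpha> i) = m" using assms by (auto simp: homogeneous4_def)
    moreover have "\<alpha> i \<le> (\<Sum>i\<in>UNIV. \<alpha> i)" for i by (rule member_le_sum) auto
    ultimately show "\<alpha> \<in> PiE UNIV (\<lambda>_. {..m})" by (auto simp: PiE_iff)
  qed
qed (intro finite_PiE, auto)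

lemma homogeneous4_pderiv4:
  assumes "homogeneous4 m g"
  shows "homogeneous4 (m - 1) (pderiv4 i g)"
  unfolding homogeneous4_def
proof (intro allI impI)
  fix \<alpha> assume "pderiv4 i g \<alpha> \<noteq> 0"
  then have "g (\<alpha>(i := \<alpha> i + 1)) \<noteq> 0" by (auto simp: pderiv4_def)
  then have "(\<Sum>j\<in>UNIV. (\<alpha>(i := \<alpha> i + 1)) j) = m" using assms by (auto simp: homogeneous4_def)
  then show "(\<Sum>j\<in>UNIV. \<alpha> j) = m - 1"
    using member_le_sum[of i UNIV \<alpha>] by (simp only: sum_fun_upd_nat) simp
qed

lemma pderiv4_commute: "pderiv4 j (pderiv4 i g) = pderiv4 i (pderiv4 j g)"
  by (cases "i = j") (auto simp: pderiv4_def fun_upd_twist mult_ac intro!: ext)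

section \<open>Restriction of a polynomial to a line\<close>

definition line_monomial :: "(4 \<Rightarrow> 'a::comm_semiring_1) \<Rightarrow> (4 \<Rightarrow> 'a) \<Rightarrow> (4 \<Rightarrow> nat) \<Rightarrow> 'a poly"
  where "line_monomial u v \<alpha> = (\<Prod>i\<in>UNIV. [:u i, v i:] ^ \<alpha> i)"

definition line_restrict :: "(4 \<Rightarrow> 'a::comm_semiring_1) \<Rightarrow> (4 \<Rightarrow> 'a) \<Rightarrow> 'a mpoly4 \<Rightarrow> 'a poly"
  where "line_restrict u v g = (\<Sum>\<alpha>\<in>{\<alpha>. g \<alpha> \<noteq> 0}. smult (g \<alpha>) (line_monomial u v \<alpha>))"

lemma line_restrict_eq_sum_superset:
  assumes "finite S" "{\<alpha>. g \<alpha> \<noteq> 0} \<subseteq> S"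
  shows "line_restrict u v g = (\<Sum>\<alpha>\<in>S. smult (g \<alpha>) (line_monomial u v \<alpha>))"
  unfolding line_restrict_def by (rule sum.mono_neutral_left) (use assms in auto)

lemma poly_line_restrict:
  assumes "finite {\<alpha>. g \<alpha> \<noteq> 0}"
  shows "poly (line_restrict u v g) x = eval4 g (\<lambda>i. u i + x * v i)"
  unfolding line_restrict_def eval4_def line_monomial_def
  by (simp add: poly_sum poly_prod algebra_simps)

lemma line_restrict_pderiv4:
  assumes fin: "finite {\<alpha>. g \<alpha> \<noteq> 0}"
  shows "line_restrict u v (pderiv4 i g) =
    (\<Sum>\<alpha>\<in>{\<alpha>. g \<alpha> \<noteq> 0}. smult (g \<alpha> * of_nat (\<alpha> i)) (line_monomial u v (\<alpha>(i := \<alpha> i - 1))))"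
proof -
  define S where "S = {\<alpha>. g \<alpha> \<noteq> 0 \<and> \<alpha> i \<ge> 1}"
  define h where "h = (\<lambda>\<alpha>::4\<Rightarrow>nat. \<alpha>(i := \<alpha> i - 1))"
  have finS: "finite S" using fin by (rule rev_finite_subset) (auto simp: S_def)
  have inj: "inj_on h S"
  proof
    fix \<alpha> \<beta> assume "\<alpha> \<in> S" "\<beta> \<in> S" "h \<alpha> = h \<beta>"
    then show "\<alpha> = \<beta>" unfolding S_def h_def
      by (metis (no_types, lifting) fun_upd_eqD fun_upd_idem_iff fun_upd_upd le_add_diff_inverse2 mem_Collect_eq)
  qed
  have "{\<beta>. pderiv4 i g \<beta> \<noteq> 0} \<subseteq> h ` S"
  proof
    fix \<beta> assume "\<beta> \<in> {\<beta>. pderiv4 i g \<beta> \<noteq> 0}"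
    then have "\<beta>(i := \<beta> i + 1) \<in> S" by (auto simp: S_def pderiv4_def)
    moreover have "h (\<beta>(i := \<beta> i + 1)) = \<beta>" by (auto simp: h_def)
    ultimately show "\<beta> \<in> h ` S" by (metis imageI)
  qed
  then have "line_restrict u v (pderiv4 i g) = (\<Sum>\<beta>\<in>h ` S. smult (pderiv4 i g \<beta>) (line_monomial u v \<beta>))"
    by (intro line_restrict_eq_sum_superset) (use finS in auto)
  also have "\<dots> = (\<Sum>\<alpha>\<in>S. smult (pderiv4 i g (h \<alpha>)) (line_monomial u v (h \<alpha>)))"
    by (rule sum.reindex[OF inj, unfolded comp_def])
  also have "\<dots> = (\<Sum>\<alpha>\<in>S. smult (g \<alpha> * of_nat (\<alpha> i)) (line_monomial u v (\<alpha>(i := \<alpha> i - 1))))"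
  proof (rule sum.cong[OF refl])
    fix \<alpha> assume "\<alpha> \<in> S"
    then have "(h \<alpha>)(i := h \<alpha> i + 1) = \<alpha>" "h \<alpha> i + 1 = \<alpha> i" by (auto simp: S_def h_def)
    then show "smult (pderiv4 i g (h \<alpha>)) (line_monomial u v (h \<alpha>)) =
        smult (g \<alpha> * of_nat (\<alpha> i)) (line_monomial u v (\<alpha>(i := \<alpha> i - 1)))"
      by (simp add: pderiv4_def h_def mult.commute) (metis of_nat_Suc add.commute)
  qed
  also have "\<dots> = (\<Sum>\<alpha>\<in>{\<alpha>. g \<alpha> \<noteq> 0}. smult (g \<alpha> * of_nat (\<alpha> i)) (line_monomial u v (\<alpha>(i := \<alpha> i - 1))))"
    by (rule sum.mono_neutral_left) (use fin in \<open>auto simp: S_def Suc_le_eq intro: gr0I\<close>)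
  finally show ?thesis .
qed

lemma pderiv_line_monomial:
  "pderiv (line_monomial u v \<alpha>) =
    (\<Sum>i\<in>UNIV. smult (v i * of_nat (\<alpha> i)) (line_monomial u v (\<alpha>(i := \<alpha> i - 1))))"
proof -
  have "pderiv (line_monomial u v \<alpha>) =
      (\<Sum>i\<in>UNIV. (\<Prod>j\<in>UNIV-{i}. [:u j, v j:] ^ \<alpha> j) * pderiv ([:u i, v i:] ^ \<alpha> i))"
    unfolding line_monomial_def by (rule pderiv_prod)
  also have "\<dots> = (\<Sum>i\<in>UNIV. smult (v i * of_nat (\<alpha> i)) (line_monomial u v (\<alpha>(i := \<alpha> i - 1))))"
  proof (rule sum.cong[OF refl])
    fix i
    have "line_monomial u v (\<alpha>(i := \<alpha> i - 1)) =
        [:u i, v i:] ^ (\<alpha> i - 1) * (\<Prod>j\<in>UNIV-{i}. [:u j, v j:] ^ \<alpha> j)"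
      unfolding line_monomial_def by (subst prod.remove[of UNIV i]) (auto intro!: prod.cong)
    then show "(\<Prod>j\<in>UNIV-{i}. [:u j, v j:] ^ \<alpha> j) * pderiv ([:u i, v i:] ^ \<alpha> i) =
        smult (v i * of_nat (\<alpha> i)) (line_monomial u v (\<alpha>(i := \<alpha> i - 1)))"
      by (simp add: pderiv_power pderiv_pCons algebra_simps)
  qed
  finally show ?thesis .
qed

lemma smult_sum_right: "smult a (sum f S) = (\<Sum>x\<in>S. smult a (f x))"
  by (induction S rule: infinite_finite_induct) (auto simp: smult_add_right)

lemma pderiv_sum: "pderiv (sum f S) = (\<Sum>x\<in>S. pderiv (f x))"
  by (induction S rule: infinite_finite_induct) (auto simp: pderiv_add)

lemma pderiv_line_restrict:
  assumes fin: "finite {\<alpha>. g \<alpha> \<noteq> 0}"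
  shows "pderiv (line_restrict u v g) = (\<Sum>i\<in>UNIV. smult (v i) (line_restrict u v (pderiv4 i g)))"
proof -
  have "pderiv (line_restrict u v g) =
      (\<Sum>\<alpha>\<in>{\<alpha>. g \<alpha> \<noteq> 0}. smult (g \<alpha>) (pderiv (line_monomial u v \<alpha>)))"
    unfolding line_restrict_def by (simp add: pderiv_sum pderiv_smult)
  also have "\<dots> = (\<Sum>\<alpha>\<in>{\<alpha>. g \<alpha> \<noteq> 0}. \<Sum>i\<in>UNIV.
      smult (v i) (smult (g \<alpha> * of_nat (\<alpha> i)) (line_monomial u v (\<alpha>(i := \<alpha> i - 1)))))"
    by (simp add: pderiv_line_monomial smult_sum_right mult_ac)
  also have "\<dots> = (\<Sum>i\<in>UNIV. smult (v i) (line_restrict u v (pderiv4 i g)))"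
    by (subst sum.swap) (simp add: line_restrict_pderiv4[OF fin] smult_sum_right mult_ac)
  finally show ?thesis .
qed

lemma coeff_mult_at_degree_bounds:
  fixes p q :: "'a::comm_semiring_1 poly"
  assumes "degree p \<le> m" "degree q \<le> n"
  shows "coeff (p * q) (m + n) = coeff p m * coeff q n"
proof (cases "degree p = m \<and> degree q = n")
  case True
  then show ?thesis using coeff_mult_degree_sum[of p q] by simp
next
  case False
  then have "coeff p m = 0 \<or> coeff q n = 0" using assms by (auto intro: coeff_eq_0)
  moreover have "degree (p * q) < m + n" using False assms degree_mult_le[of p q] by linarith
  ultimately show ?thesis by (auto simp: coeff_eq_0)
qed

lemma coeff_prod_at_degree_bounds:
  fixes p :: "'b \<Rightarrow> 'a::comm_semiring_1 poly"
  assumes "finite S" "\<And>i. i \<in> S \<Longrightarrow> degree (p i) \<le> k i"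
  shows "coeff (prod p S) (sum k S) = (\<Prod>i\<in>S. coeff (p i) (k i))"
  using assms
proof (induction S rule: finite_induct)
  case (insert x F)
  have "degree (prod p F) \<le> sum k F"
    using insert degree_prod_sum_le[of F p] sum_mono[of F "degree \<circ> p" k] by auto
  then show ?case using insert coeff_mult_at_degree_bounds[of "p x" "k x" "prod p F" "sum k F"] by simp
qed simp

lemma degree_line_monomial_le: "degree (line_monomial u v \<alpha>) \<le> (\<Sum>i\<in>UNIV. \<alpha> i)"
proof -
  have "degree ([:u i, v i:] ^ \<alpha> i) \<le> \<alpha> i" for i
    using degree_power_le[of "[:u i, v i:]" "\<alpha> i"] by (cases "v i = 0") auto
  then show ?thesis
    unfolding line_monomial_def using degree_prod_sum_le[of UNIV] sum_mono
    by (metis (no_types, lifting) comp_apply finite order_trans)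
qed

lemma coeff_line_monomial: "coeff (line_monomial u v \<alpha>) (\<Sum>i\<in>UNIV. \<alpha> i) = (\<Prod>i\<in>UNIV. v i ^ \<alpha> i)"
proof -
  have "degree ([:u i, v i:] ^ \<alpha> i) \<le> \<alpha> i" for i
    using degree_power_le[of "[:u i, v i:]" "\<alpha> i"] by (cases "v i = 0") auto
  then show ?thesis
    unfolding line_monomial_def by (simp add: coeff_prod_at_degree_bounds coeff_linear_poly_power)
qed

lemma degree_line_restrict_le:
  assumes "homogeneous4 m g"
  shows "degree (line_restrict u v g) \<le> m"
  unfolding line_restrict_def
proof (rule degree_sum_le[OF homogeneous4_finite_support[OF assms]])
  fix \<alpha> assume "\<alpha> \<in> {\<alpha>. g \<alpha> \<noteq> 0}"
  then have "(\<Sum>i\<in>UNIV. \<alpha> i) = m" using assms by (auto simp: homogeneous4_def)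
  then show "degree (smult (g \<alpha>) (line_monomial u v \<alpha>)) \<le> m"
    using degree_line_monomial_le[of u v \<alpha>] degree_smult_le order_trans by metis
qed

lemma coeff_line_restrict:
  assumes "homogeneous4 m g"
  shows "coeff (line_restrict u v g) m = eval4 g v"
proof -
  have "coeff (line_restrict u v g) m = (\<Sum>\<alpha>\<in>{\<alpha>. g \<alpha> \<noteq> 0}. g \<alpha> * coeff (line_monomial u v \<alpha>) m)"
    by (simp add: line_restrict_def coeff_sum)
  also have "\<dots> = eval4 g v"
    unfolding eval4_def
  proof (intro sum.cong refl)
    fix \<alpha> assume "\<alpha> \<in> {\<alpha>. g \<alpha> \<noteq> 0}"
    then have "m = (\<Sum>i\<in>UNIV. \<alpha> i)" using assms by (auto simp: homogeneous4_def)
    then show "g \<alpha> * coeff (line_monomial u v \<alpha>) m = g \<alpha> * (\<Prod>i\<in>UNIV. v i ^ \<alpha> i)"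
      by (simp add: coeff_line_monomial)
  qed
  finally show ?thesis .
qed

definition lin_form :: "(4 \<Rightarrow> 'a::comm_semiring_1) \<Rightarrow> (4 \<Rightarrow> 'a) \<Rightarrow> 'a"
  where "lin_form g z = (\<Sum>i\<in>UNIV. g i * z i)"

definition bilin_form :: "(4 \<Rightarrow> 4 \<Rightarrow> 'a::comm_semiring_1) \<Rightarrow> (4 \<Rightarrow> 'a) \<Rightarrow> (4 \<Rightarrow> 'a) \<Rightarrow> 'a"
  where "bilin_form H u v = (\<Sum>i\<in>UNIV. \<Sum>j\<in>UNIV. H i j * u i * v j)"

definition unit4 :: "4 \<Rightarrow> 4 \<Rightarrow> 'a::zero_neq_one"
  where "unit4 k = (\<lambda>l. if l = k then 1 else 0)"

lemma lin_form_lin: "lin_form g (\<lambda>i. s * u i + t * w i) = s * lin_form g u + t * lin_form g w"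
  by (simp add: lin_form_def algebra_simps sum.distrib sum_distrib_left)

lemma lin_form_scale: "lin_form (\<lambda>i. c * g i) z = c * lin_form g z"
  by (simp add: lin_form_def sum_distrib_left mult.assoc)

lemma lin_form_unit4: "lin_form g (unit4 k) = g k"
  by (simp add: lin_form_def unit4_def if_distrib cong: if_cong)

lemma bilin_form_lin_left:
  "bilin_form H (\<lambda>i. s * u i + t * w i) v = s * bilin_form H u v + t * bilin_form H w v"
  by (simp add: bilin_form_def algebra_simps sum.distrib sum_distrib_left)

lemma bilin_form_lin_right:
  "bilin_form H u (\<lambda>i. s * v i + t * w i) = s * bilin_form H u v + t * bilin_form H u w"
  by (simp add: bilin_form_def algebra_simps sum.distrib sum_distrib_left)

lemma bilin_form_zero_right: "bilin_form H u (\<lambda>_. 0) = 0"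
  by (simp add: bilin_form_def)

lemma bilin_form_scale: "bilin_form (\<lambda>i j. c * H i j) u v = c * bilin_form H u v"
  by (simp add: bilin_form_def sum_distrib_left mult.assoc)

lemma bilin_form_unit4: "bilin_form H u (unit4 k) = (\<Sum>i\<in>UNIV. H i k * u i)"
  by (simp add: bilin_form_def unit4_def if_distrib cong: if_cong)

lemma bilin_form_expand_right: "bilin_form H u v = (\<Sum>k\<in>UNIV. v k * bilin_form H u (unit4 k))"
proof -
  have "(\<Sum>k\<in>UNIV. v k * bilin_form H u (unit4 k)) = (\<Sum>k\<in>UNIV. \<Sum>i\<in>UNIV. H i k * u i * v k)"
    by (simp add: bilin_form_unit4 sum_distrib_left mult_ac)
  also have "\<dots> = bilin_form H u v" unfolding bilin_form_def by (rule sum.swap)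
  finally show ?thesis by simp
qed

lemma bilin_form_commute:
  assumes "\<And>i j. H i j = H j i"
  shows "bilin_form H u v = bilin_form H v u"
  unfolding bilin_form_def by (subst sum.swap) (simp add: assms mult_ac)

lemma bilin_form_quadratic:
  fixes H :: "4 \<Rightarrow> 4 \<Rightarrow> 'a::comm_ring_1"
  assumes "\<And>i j. H i j = H j i"
  shows "bilin_form H (\<lambda>i. s * u i + t * w i) (\<lambda>i. s * u i + t * w i)
     = s * s * bilin_form H u u + 2 * s * t * bilin_form H u w + t * t * bilin_form H w w"
  using bilin_form_commute[of H u w, OF assms]
  by (simp add: bilin_form_lin_left bilin_form_lin_right algebra_simps)

section \<open>Euler's formula\<close>

lemma prod_monom: "(\<Prod>i\<in>S. monom (c i) (k i)) = monom (prod c S) (sum k S)"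
  by (induction S rule: infinite_finite_induct) (auto simp: mult_monom)

lemma line_restrict_through_origin:
  assumes "homogeneous4 m g"
  shows "line_restrict (\<lambda>_. 0) z g = monom (eval4 g z) m"
proof -
  have "[:0, z i:] ^ k = monom (z i ^ k) k" for i k
    by (simp add: monom_power flip: monom_altdef[of "z i" 1, simplified])
  then have "line_monomial (\<lambda>_. 0) z \<alpha> = monom (\<Prod>i\<in>UNIV. z i ^ \<alpha> i) (\<Sum>i\<in>UNIV. \<alpha> i)" for \<alpha>
    unfolding line_monomial_def by (simp add: prod_monom)
  then have "line_restrict (\<lambda>_. 0) z g =
      (\<Sum>\<alpha>\<in>{\<alpha>. g \<alpha> \<noteq> 0}. monom (g \<alpha> * (\<Prod>i\<in>UNIV. z i ^ \<alpha> i)) m)"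
    unfolding line_restrict_def using assms
    by (auto simp: smult_monom homogeneous4_def intro!: sum.cong)
  also have "\<dots> = monom (eval4 g z) m" by (simp add: eval4_def monom_sum)
  finally show ?thesis .
qed

lemma eval4_scale:
  assumes "homogeneous4 m g"
  shows "eval4 g (\<lambda>i. c * z i) = c ^ m * eval4 g z"
proof -
  have "eval4 g (\<lambda>i. c * z i) = poly (line_restrict (\<lambda>_. 0) z g) c"
    by (simp add: poly_line_restrict[OF homogeneous4_finite_support[OF assms]])
  also have "\<dots> = c ^ m * eval4 g z"
    by (simp add: line_restrict_through_origin[OF assms] poly_monom mult.commute)
  finally show ?thesis .
qed

definition grad4 :: "'a::comm_semiring_1 mpoly4 \<Rightarrow> (4 \<Rightarrow> 'a) \<Rightarrow> 4 \<Rightarrow> 'a"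
  where "grad4 g z i = eval4 (pderiv4 i g) z"

definition hess4 :: "'a::comm_semiring_1 mpoly4 \<Rightarrow> (4 \<Rightarrow> 'a) \<Rightarrow> 4 \<Rightarrow> 4 \<Rightarrow> 'a"
  where "hess4 g z i j = eval4 (pderiv4 j (pderiv4 i g)) z"

lemma hess4_commute: "hess4 g z i j = hess4 g z j i"
  by (simp add: hess4_def pderiv4_commute)

lemma euler_homogeneous4:
  fixes g :: "'a::idom mpoly4"
  assumes "homogeneous4 m g"
  shows "lin_form (grad4 g z) z = of_nat m * eval4 g z"
proof -
  have "finite {\<alpha>. pderiv4 i g \<alpha> \<noteq> 0}" for i
    by (rule homogeneous4_finite_support[OF homogeneous4_pderiv4[OF assms]])
  then have "lin_form (grad4 g z) z = poly (pderiv (line_restrict (\<lambda>_. 0) z g)) 1"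
    by (simp add: pderiv_line_restrict[OF homogeneous4_finite_support[OF assms]]
        poly_sum poly_line_restrict lin_form_def grad4_def mult.commute)
  also have "\<dots> = of_nat m * eval4 g z"
    by (simp add: line_restrict_through_origin[OF assms] pderiv_monom poly_monom)
  finally show ?thesis .
qed

lemma euler_hess4:
  fixes g :: "'a::idom mpoly4"
  assumes "homogeneous4 m g"
  shows "bilin_form (hess4 g z) z v = of_nat (m - 1) * lin_form (grad4 g z) v"
proof -
  have row: "(\<Sum>i\<in>UNIV. hess4 g z i j * z i) = of_nat (m - 1) * grad4 g z j" for j
    using euler_homogeneous4[OF homogeneous4_pderiv4[OF assms, of j], of z]
    by (simp add: lin_form_def grad4_def hess4_def pderiv4_commute[of _ j])
  have "bilin_form (hess4 g z) z v = (\<Sum>j\<in>UNIV. v j * (\<Sum>i\<in>UNIV. hess4 g z i j * z i))"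
    unfolding bilin_form_def by (subst sum.swap) (simp add: sum_distrib_left mult_ac)
  also have "\<dots> = of_nat (m - 1) * lin_form (grad4 g z) v"
    by (simp only: row) (simp add: lin_form_def sum_distrib_left mult_ac)
  finally show ?thesis .
qed

section \<open>Wronskians\<close>

definition wronskian :: "'a::idom poly \<Rightarrow> 'a poly \<Rightarrow> 'a poly"
  where "wronskian p q = p * pderiv q - pderiv p * q"

lemma wronskian_self: "wronskian p p = 0"
  by (simp add: wronskian_def mult.commute)

lemma wronskian_diff_right: "wronskian p (q - r) = wronskian p q - wronskian p r"
  by (simp add: wronskian_def pderiv_diff algebra_simps)

lemma wronskian_smult_right: "wronskian p (smult c q) = smult c (wronskian p q)"
  by (simp add: wronskian_def pderiv_smult smult_diff_right)

lemma of_nat_eq_iff_below_CHAR: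
  assumes "CHAR('a::semiring_1_cancel) = 0 \<or> m < CHAR('a)" "u \<le> m" "v \<le> m"
  shows "(of_nat u :: 'a) = of_nat v \<longleftrightarrow> u = v"
  using assms by (auto simp: of_nat_eq_iff_cong_CHAR cong_def)

lemma coeff_mult_pderiv_top:
  fixes p q :: "'a::idom poly"
  assumes "1 \<le> degree p + degree q"
  shows "coeff (p * pderiv q) (degree p + degree q - 1) = of_nat (degree q) * lead_coeff p * lead_coeff q"
proof (cases "degree q = 0")
  case True
  then show ?thesis by (auto elim: degree_eq_zeroE)
next
  case False
  have "degree (pderiv q) \<le> degree q - 1"
    by (rule degree_le) (auto simp: coeff_pderiv coeff_eq_0)
  then have "coeff (p * pderiv q) (degree p + (degree q - 1)) = lead_coeff p * coeff (pderiv q) (degree q - 1)"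
    by (intro coeff_mult_at_degree_bounds) auto
  then show ?thesis using False by (simp add: coeff_pderiv mult_ac)
qed

text \<open>After reducing \<open>q\<close> by a multiple of \<open>p\<close> to a different degree, the top coefficient of the
  Wronskian is \<open>deg q - deg p\<close> times a nonzero product; the bound on the degrees keeps that
  factor nonzero in the field.\<close>

lemma wronskian_eq_0_imp_proportional:
  fixes p q :: "'a::field poly"
  assumes dp: "degree p \<le> m" and dq: "degree q \<le> m" and ch: "CHAR('a) = 0 \<or> m < CHAR('a)"
    and W: "wronskian p q = 0" and p0: "p \<noteq> 0"
  shows "\<exists>c. q = smult c p"
proof -
  define v where "v = degree p"
  define r where "r = smult (lead_coeff p) q - smult (coeff q v) p"
  have pv: "lead_coeff p \<noteq> 0" using p0 by simp
  have Wr: "wronskian p r = 0"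
    using W by (simp add: r_def wronskian_diff_right wronskian_smult_right wronskian_self)
  have "r = 0"
  proof (rule ccontr)
    assume r0: "r \<noteq> 0"
    define u where "u = degree r"
    have "coeff r v = 0" by (simp add: r_def v_def)
    then have uv: "u \<noteq> v" using r0 by (auto simp: u_def)
    have "degree r \<le> m" unfolding r_def using dp dq
      by (intro degree_diff_le) (auto intro: order_trans[OF degree_smult_le])
    then have du: "u \<le> m" by (simp add: u_def)
    have "coeff (wronskian p r) (v + u - 1) = (of_nat u - of_nat v) * (lead_coeff p * lead_coeff r)"
      using coeff_mult_pderiv_top[of p r] coeff_mult_pderiv_top[of r p] uv
      by (simp add: wronskian_def u_def v_def algebra_simps add.commute)
    then have "(of_nat u :: 'a) = of_nat v" using Wr pv r0 by simp
    then show False using uv du dp of_nat_eq_iff_below_CHAR[OF ch] by (simp add: v_def)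
  qed
  then have "smult (lead_coeff p) q = smult (lead_coeff p) (smult (coeff q v / lead_coeff p) p)"
    using pv by (simp add: r_def v_def)
  then show ?thesis using pv by (metis smult_cancel)
qed

section \<open>Plane sections of a quadric containing a line\<close>

lemma dim_hyperplane_le_3:
  fixes g :: "4 \<Rightarrow> 'a::field"
  assumes "g \<noteq> (\<lambda>_. 0)"
  shows "vec.dim {x::'a^4. (\<Sum>i\<in>UNIV. g i * x$i) = 0} \<le> 3"
proof -
  define V where "V = {x::'a^4. (\<Sum>i\<in>UNIV. g i * x$i) = 0}"
  obtain k where "g k \<noteq> 0" using assms by auto
  then have "axis k 1 \<notin> V" by (simp add: V_def axis_def if_distrib cong: if_cong)
  moreover have "vec.span V = V"
    unfolding vec.span_eq_iff vec.subspace_def V_def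
    by (auto simp: distrib_left sum.distrib mult.left_commute[of "g _"] simp flip: sum_distrib_left)
  ultimately have "vec.span V \<noteq> UNIV" by (metis UNIV_I)
  then have "vec.dim V < vec.dim (UNIV :: ('a^4) set)"
    by (intro vec.dim_psubset) (auto simp: vec.span_UNIV)
  then show ?thesis by (simp add: V_def card_cart_basis)
qed

lemma in_span_of_three_in_plane:
  fixes g a b n z :: "4 \<Rightarrow> 'a::field"
  assumes g: "g \<noteq> (\<lambda>_. 0)"
    and "lin_form g a = 0" "lin_form g b = 0" "lin_form g n = 0" "lin_form g z = 0"
    and indep: "\<And>\<alpha> \<beta> \<gamma>. (\<And>i. \<alpha> * a i + \<beta> * b i + \<gamma> * n i = 0) \<Longrightarrow> \<alpha> = 0 \<and> \<beta> = 0 \<and> \<gamma> = 0"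
  shows "\<exists>\<alpha> \<beta> \<gamma>. z = (\<lambda>i. \<alpha> * a i + \<beta> * b i + \<gamma> * n i)"
proof -
  define A where "A = (\<chi> i. a i)"
  define B where "B = (\<chi> i. b i)"
  define N where "N = (\<chi> i. n i)"
  define Z where "Z = (\<chi> i. z i)"
  have in_V: "A \<in> V" "B \<in> V" "N \<in> V" "Z \<in> V" if "V = {x::'a^4. (\<Sum>i\<in>UNIV. g i * x$i) = 0}" for V
    using assms(2-5) that by (auto simp: lin_form_def A_def B_def N_def Z_def)
  have "N \<noteq> 0"
    using indep[of 0 0 1] by (auto simp: N_def vec_eq_iff)
  have BN: "B \<notin> vec.span {N}"
  proof
    assume "B \<in> vec.span {N}"
    then obtain c where "B = c *s N" by (auto simp: vec.span_singleton)
    then show False using indep[of 0 1 "- c"] by (auto simp: B_def N_def vec_eq_iff)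
  qed
  have ABN: "A \<notin> vec.span {B, N}"
  proof
    assume "A \<in> vec.span {B, N}"
    then obtain c1 where "A - c1 *s B \<in> vec.span {N}" by (auto simp: vec.span_breakdown_eq)
    then obtain c2 where "A - c1 *s B = c2 *s N" by (auto simp: vec.span_singleton)
    then show False using indep[of 1 "- c1" "- c2"] by (auto simp: A_def B_def N_def vec_eq_iff algebra_simps)
  qed
  have "vec.independent {A, B, N}"
    using \<open>N \<noteq> 0\<close> BN ABN
    by (intro vec.independent_insertI) (auto intro: vec.independent_insertI simp: vec.independent_empty)
  have "Z \<in> vec.span {A, B, N}"
  proof (rule ccontr)
    assume Zn: "Z \<notin> vec.span {A, B, N}"
    have "vec.independent (insert Z {A, B, N})"
      using Zn \<open>vec.independent {A, B, N}\<close> by (rule vec.independent_insertI)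
    then have "card (insert Z {A, B, N}) \<le> vec.dim {x::'a^4. (\<Sum>i\<in>UNIV. g i * x$i) = 0}"
      by (intro vec.independent_card_le_dim) (use in_V in auto)
    moreover have "card (insert Z {A, B, N}) = 4"
      using Zn BN ABN vec.span_base[of _ "{A, B, N}"] vec.span_base[of _ "{B, N}"] vec.span_base[of N "{N}"]
      by (auto simp: card_insert_if)
    ultimately show False using dim_hyperplane_le_3[OF g] by simp
  qed
  then obtain c1 c2 c3 where "Z - c1 *s A - c2 *s B = c3 *s N"
    by (auto simp: vec.span_breakdown_eq vec.span_singleton)
  then have "z = (\<lambda>i. c1 * a i + c2 * b i + c3 * n i)"
    by (auto simp: A_def B_def N_def Z_def vec_eq_iff algebra_simps)
  then show ?thesis by blast
qed

definition union_of_two_lines :: "(4 \<Rightarrow> 'a::field) set \<Rightarrow> bool"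
  where "union_of_two_lines S \<longleftrightarrow>
    (\<exists>a1 b1 a2 b2. lin_indep2 a1 b1 \<and> lin_indep2 a2 b2 \<and>
       line_cone a1 b1 \<noteq> line_cone a2 b2 \<and> S = line_cone a1 b1 \<union> line_cone a2 b2)"

text \<open>Inside the plane \<open>g = 0\<close>, a quadric that contains the line \<open>\<langle>a, b\<rangle>\<close> and is singular
  at its point \<open>a + x b\<close> (relative to the plane) is that line together with a second line through
  the point; \<open>H(b, n) \<noteq> 0\<close> rules out the degenerate cases of a double line and of the whole plane.\<close>

context
  fixes g :: "4 \<Rightarrow> 'a::field" and H :: "4 \<Rightarrow> 4 \<Rightarrow> 'a" and a b n :: "4 \<Rightarrow> 'a" and x c :: 'a
  assumes two: "(2::'a) \<noteq> 0"
    and nondegenerate: "g \<noteq> (\<lambda>_. 0)"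
    and symmetric: "\<And>i j. H i j = H j i"
    and indep: "lin_indep2 a b"
    and tangent_a: "lin_form g a = 0" and tangent_b: "lin_form g b = 0"
    and tangent_n: "lin_form g n = 0"
    and hess_bb: "bilin_form H b b = 0" and hess_bn: "bilin_form H b n \<noteq> 0"
    and singular: "\<And>v. bilin_form H (\<lambda>i. a i + x * b i) v = c * lin_form g v"
begin

private lemma hess_commute: "bilin_form H u v = bilin_form H v u"
  by (rule bilin_form_commute[OF symmetric])

private lemma hess_quadratic:
  "bilin_form H (\<lambda>i. s * u i + t * w i) (\<lambda>i. s * u i + t * w i)
     = s * s * bilin_form H u u + 2 * s * t * bilin_form H u w + t * t * bilin_form H w w"
  by (rule bilin_form_quadratic[OF symmetric])

private lemma hess_ab: "bilin_form H a b = 0"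
  using singular[of b] bilin_form_lin_left[of H 1 a x b b] tangent_b hess_bb by simp

private lemma hess_aa: "bilin_form H a a = 0"
  using singular[of a] bilin_form_lin_left[of H 1 a x b a] tangent_a hess_ab
    hess_commute[of b a] by simp

private lemma hess_an: "bilin_form H a n = - x * bilin_form H b n"
  using singular[of n] bilin_form_lin_left[of H 1 a x b n] tangent_n
  by (simp add: eq_neg_iff_add_eq_0)

private lemma hess_on_line: "bilin_form H (\<lambda>i. s * a i + t * b i) (\<lambda>i. s * a i + t * b i) = 0"
  by (simp only: hess_quadratic hess_aa hess_ab hess_bb) simp

private lemma indep_abn:
  assumes "\<And>i. \<alpha> * a i + \<beta> * b i + \<gamma> * n i = 0"
  shows "\<alpha> = 0 \<and> \<beta> = 0 \<and> \<gamma> = 0"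
proof -
  have "\<gamma> * bilin_form H b n = bilin_form H b (\<lambda>i. 1 * (\<alpha> * a i + \<beta> * b i) + \<gamma> * n i)"
    using bilin_form_lin_right[of H b 1 "\<lambda>i. \<alpha> * a i + \<beta> * b i" \<gamma> n]
      bilin_form_lin_right[of H b \<alpha> a \<beta> b] hess_commute[of b a] hess_ab hess_bb
    by simp
  also have "\<dots> = bilin_form H b (\<lambda>_. 0)" using assms by simp
  finally have "\<gamma> * bilin_form H b n = 0" by (simp add: bilin_form_zero_right)
  then have "\<gamma> = 0" using hess_bn by simp
  then have "\<alpha> * a i + \<beta> * b i = 0" for i using assms[of i] by simp
  then show ?thesis using indep \<open>\<gamma> = 0\<close> unfolding lin_indep2_def by blast
qed

private lemma plane_section_subset:
  assumes z: "nonzero4 z" "lin_form g z = 0" "bilin_form H z z = 0"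
  shows "z \<in> line_cone a b \<union>
    line_cone (\<lambda>i. a i + x * b i) (\<lambda>i. (2 * bilin_form H b n) * n i + (- bilin_form H n n) * b i)"
proof -
  define \<mu> where "\<mu> = bilin_form H b n"
  define \<nu> where "\<nu> = bilin_form H n n"
  obtain \<alpha> \<beta> \<gamma> where zd: "z = (\<lambda>i. \<alpha> * a i + \<beta> * b i + \<gamma> * n i)"
    using in_span_of_three_in_plane[OF nondegenerate tangent_a tangent_b tangent_n z(2)] indep_abn
    by blast
  define w where "w = (\<lambda>i. \<alpha> * a i + \<beta> * b i)"
  have ww: "bilin_form H w w = 0" unfolding w_def by (rule hess_on_line)
  have wn: "bilin_form H w n = (\<beta> - x * \<alpha>) * \<mu>"
    unfolding w_def bilin_form_lin_left hess_an by (simp add: \<mu>_def algebra_simps)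
  have "bilin_form H z z = bilin_form H (\<lambda>i. 1 * w i + \<gamma> * n i) (\<lambda>i. 1 * w i + \<gamma> * n i)"
    by (simp add: zd w_def add.assoc)
  also have "\<dots> = \<gamma> * (2 * (\<beta> - x * \<alpha>) * \<mu> + \<gamma> * \<nu>)"
    by (simp only: hess_quadratic ww wn) (simp add: \<nu>_def algebra_simps)
  finally have "bilin_form H z z = \<gamma> * (2 * (\<beta> - x * \<alpha>) * \<mu> + \<gamma> * \<nu>)" .
  then have "\<gamma> = 0 \<or> 2 * (\<beta> - x * \<alpha>) * \<mu> + \<gamma> * \<nu> = 0" using z(3) by simp
  then show ?thesis
  proof
    assume "\<gamma> = 0"
    then show ?thesis using z(1) zd by (auto simp: line_cone_def)
  next
    assume e: "2 * (\<beta> - x * \<alpha>) * \<mu> + \<gamma> * \<nu> = 0"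
    define q where "q = \<gamma> / (2 * \<mu>)"
    have q: "q * (2 * \<mu>) = \<gamma>" using two hess_bn by (simp add: q_def \<mu>_def)
    have "(\<beta> - (\<alpha> * x - q * \<nu>)) * (2 * \<mu>) = 0" using e[folded q] by (simp add: algebra_simps)
    then have \<beta>: "\<beta> = \<alpha> * x - q * \<nu>" using two hess_bn by (simp add: \<mu>_def)
    have "z = (\<lambda>i. \<alpha> * (a i + x * b i) + q * ((2 * \<mu>) * n i + (- \<nu>) * b i))"
      unfolding zd \<beta> q[symmetric] by (simp add: fun_eq_iff algebra_simps)
    then show ?thesis using z(1) by (auto simp: line_cone_def \<mu>_def \<nu>_def)
  qed
qed

lemma plane_section_union_of_two_lines:
  "union_of_two_lines {z. nonzero4 z \<and> lin_form g z = 0 \<and> bilin_form H z z = 0}"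
proof -
  define \<mu> where "\<mu> = bilin_form H b n"
  define \<nu> where "\<nu> = bilin_form H n n"
  define P where "P = (\<lambda>i. a i + x * b i)"
  define m where "m = (\<lambda>i. (2 * \<mu>) * n i + (- \<nu>) * b i)"
  have "2 * \<mu> \<noteq> 0" using two hess_bn by (simp add: \<mu>_def)
  have indep_Pm: "lin_indep2 P m"
    unfolding lin_indep2_def
  proof (intro allI impI)
    fix s t assume st: "\<forall>i. s * P i + t * m i = 0"
    have "s * a i + (s * x - t * \<nu>) * b i + (t * (2 * \<mu>)) * n i = 0" for i
      using st[rule_format, of i] by (simp add: P_def m_def algebra_simps)
    from indep_abn[OF this] show "s = 0 \<and> t = 0" using \<open>2 * \<mu> \<noteq> 0\<close> by simp
  qed
  have "m \<notin> line_cone a b"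
  proof
    assume "m \<in> line_cone a b"
    then obtain s t where mst: "m = (\<lambda>i. s * a i + t * b i)" by (auto simp: line_cone_def)
    have "(- s) * a i + (- \<nu> - t) * b i + (2 * \<mu>) * n i = 0" for i
      using fun_cong[OF mst, of i] by (simp add: m_def algebra_simps)
    from indep_abn[OF this] show False using \<open>2 * \<mu> \<noteq> 0\<close> by simp
  qed
  moreover have "m \<in> line_cone P m"
  proof -
    have "nonzero4 m"
    proof (rule ccontr)
      assume "\<not> nonzero4 m"
      then have "\<forall>i. 0 * P i + 1 * m i = 0" by (simp add: nonzero4_def)
      then have "(1::'a) = 0" using indep_Pm unfolding lin_indep2_def by blast
      then show False by simp
    qed
    moreover have "m = (\<lambda>i. 0 * P i + 1 * m i)" by simp
    ultimately show ?thesis unfolding line_cone_def by blast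
  qed
  ultimately have distinct: "line_cone a b \<noteq> line_cone P m" by auto
  have TP: "lin_form g P = 0"
    using lin_form_lin[of g 1 a x b] tangent_a tangent_b by (simp add: P_def)
  have Tm: "lin_form g m = 0"
    unfolding m_def lin_form_lin tangent_b tangent_n by simp
  have HP: "bilin_form H P v = c * lin_form g v" for v
    unfolding P_def by (rule singular)
  have Hmm: "bilin_form H m m = 0"
    unfolding m_def hess_quadratic hess_bb hess_commute[of n b] by (simp add: \<mu>_def \<nu>_def algebra_simps)
  have second_line: "lin_form g (\<lambda>i. s * P i + t * m i) = 0"
    "bilin_form H (\<lambda>i. s * P i + t * m i) (\<lambda>i. s * P i + t * m i) = 0" for s t
    by (simp_all only: lin_form_lin hess_quadratic HP TP Tm Hmm) simp_all
  have "{z. nonzero4 z \<and> lin_form g z = 0 \<and> bilin_form H z z = 0} = line_cone a b \<union> line_cone P m"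
  proof (intro equalityI subsetI)
    fix z assume "z \<in> {z. nonzero4 z \<and> lin_form g z = 0 \<and> bilin_form H z z = 0}"
    then show "z \<in> line_cone a b \<union> line_cone P m"
      using plane_section_subset[of z] by (simp add: P_def m_def \<mu>_def \<nu>_def)
  next
    fix z assume "z \<in> line_cone a b \<union> line_cone P m"
    then obtain s t where "nonzero4 z"
      and "z = (\<lambda>i. s * a i + t * b i) \<or> z = (\<lambda>i. s * P i + t * m i)"
      unfolding line_cone_def by blast
    then show "z \<in> {z. nonzero4 z \<and> lin_form g z = 0 \<and> bilin_form H z z = 0}"
      using second_line hess_on_line by (auto simp: lin_form_lin tangent_a tangent_b)
  qed
  then show ?thesis unfolding union_of_two_lines_def using indep indep_Pm distinct by blast
qed

end

section \<open>The tangent plane and the Hessian quadric along a line of the surface\<close>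

lemma infinite_UNIV_alg_closed: "infinite (UNIV :: 'a::alg_closed_field set)"
proof
  assume fin: "finite (UNIV :: 'a set)"
  define q :: "'a poly" where "q = (\<Prod>c\<in>UNIV. [:- c, 1:]) + 1"
  have "degree (\<Prod>c\<in>(UNIV::'a set). [:- c, 1:]) = card (UNIV :: 'a set)"
    by (subst degree_prod_sum_eq) auto
  moreover have "card (UNIV :: 'a set) > 0" using fin by (simp add: card_gt_0_iff)
  ultimately have "degree q > 0" unfolding q_def by (subst degree_add_eq_left) auto
  then obtain x where "poly q x = 0" using alg_closed_imp_poly_has_root by blast
  moreover have "poly (\<Prod>c\<in>(UNIV::'a set). [:- c, 1:]) x = 0"
    using fin by (simp add: poly_prod prod_zero_iff)
  ultimately show False by (simp add: q_def)
qed

lemma poly_eq_0_alg_closed: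
  fixes p :: "'a::alg_closed_field poly"
  assumes "\<And>x. poly p x = 0"
  shows "p = 0"
  using poly_roots_finite[of p] infinite_UNIV_alg_closed assms by auto

lemma nonzero4_lin_comb:
  assumes "lin_indep2 a b" "s \<noteq> 0 \<or> t \<noteq> 0"
  shows "nonzero4 (\<lambda>i. s * a i + t * b i)"
  using assms unfolding lin_indep2_def nonzero4_def by blast

lemma two_distinct_lines_iff_union_of_two_lines:
  "two_distinct_lines f P \<longleftrightarrow>
    union_of_two_lines {z. nonzero4 z \<and> lin_form (grad4 f P) z = 0 \<and> bilin_form (hess4 f P) z z = 0}"
  by (simp add: two_distinct_lines_def union_of_two_lines_def tangent_form_def hessian_form_def
      lin_form_def bilin_form_def grad4_def hess4_def)

locale smooth_surface_line =
  fixes f :: "'a::alg_closed_field mpoly4" and d :: nat and a b :: "4 \<Rightarrow> 'a"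
  assumes homogeneous: "homogeneous4 d f"
    and smooth: "smooth_surface f"
    and indep: "lin_indep2 a b"
    and vanishes_on_line: "\<And>s t. eval4 f (\<lambda>i. s * a i + t * b i) = 0"
begin

abbreviation point :: "'a \<Rightarrow> 4 \<Rightarrow> 'a"
  where "point x \<equiv> \<lambda>i. a i + x * b i"

definition grad_poly :: "4 \<Rightarrow> 'a poly"
  where "grad_poly i = line_restrict a b (pderiv4 i f)"

lemma finite_supports:
  "finite {\<alpha>. f \<alpha> \<noteq> 0}" "finite {\<alpha>. pderiv4 i f \<alpha> \<noteq> 0}"
  "finite {\<alpha>. pderiv4 j (pderiv4 i f) \<alpha> \<noteq> 0}"
  using homogeneous4_finite_support[OF homogeneous]
    homogeneous4_finite_support[OF homogeneous4_pderiv4[OF homogeneous]]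
    homogeneous4_finite_support[OF homogeneous4_pderiv4[OF homogeneous4_pderiv4[OF homogeneous]]]
  by blast+

lemma point_nonzero: "nonzero4 (point x)"
  using nonzero4_lin_comb[OF indep, of 1 x] by simp

lemma eval_point: "eval4 f (point x) = 0"
  using vanishes_on_line[of 1 x] by simp

lemma grad_point_nonzero: "\<exists>k. grad4 f (point x) k \<noteq> 0"
  using smooth point_nonzero eval_point by (auto simp: smooth_surface_def grad4_def)

lemma line_restrict_vanishes: "line_restrict a b f = 0"
  by (rule poly_eq_0_alg_closed) (simp add: poly_line_restrict finite_supports eval_point)

lemma poly_grad_poly: "poly (grad_poly i) x = grad4 f (point x) i"
  by (simp add: grad_poly_def poly_line_restrict finite_supports grad4_def)

lemma poly_pderiv_grad_poly: "poly (pderiv (grad_poly k)) x = bilin_form (hess4 f (point x)) b (unit4 k)"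
proof -
  have "poly (pderiv (grad_poly k)) x = (\<Sum>i\<in>UNIV. b i * hess4 f (point x) k i)"
    by (simp add: grad_poly_def pderiv_line_restrict finite_supports poly_sum poly_line_restrict hess4_def)
  also have "\<dots> = bilin_form (hess4 f (point x)) b (unit4 k)"
    by (simp add: bilin_form_unit4 hess4_commute[of f _ k] mult.commute)
  finally show ?thesis .
qed

lemma directional_derivative_vanishes: "(\<Sum>i\<in>UNIV. smult (b i) (grad_poly i)) = 0"
  using pderiv_line_restrict[OF finite_supports(1), of a b] line_restrict_vanishes
  by (simp add: grad_poly_def)

lemma tangent_b: "lin_form (grad4 f (point x)) b = 0"
proof -
  have "lin_form (grad4 f (point x)) b = poly (\<Sum>i\<in>UNIV. smult (b i) (grad_poly i)) x"
    by (simp add: poly_sum poly_grad_poly lin_form_def mult.commute)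
  then show ?thesis by (simp add: directional_derivative_vanishes)
qed

lemma tangent_a: "lin_form (grad4 f (point x)) a = 0"
proof -
  have "lin_form (grad4 f (point x)) (point x) = 0"
    using euler_homogeneous4[OF homogeneous] eval_point by simp
  then show ?thesis using lin_form_lin[of "grad4 f (point x)" 1 a x b] tangent_b by simp
qed

lemma hessian_bb: "bilin_form (hess4 f (point x)) b b = 0"
proof -
  have "bilin_form (hess4 f (point x)) b b = poly (pderiv (\<Sum>i\<in>UNIV. smult (b i) (grad_poly i))) x"
    by (simp add: bilin_form_expand_right[of _ b b] poly_pderiv_grad_poly pderiv_sum pderiv_smult poly_sum)
  then show ?thesis by (simp add: directional_derivative_vanishes)
qed

lemma hessian_point:
  "bilin_form (hess4 f (point x)) (point x) v = of_nat (d - 1) * lin_form (grad4 f (point x)) v"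
  by (rule euler_hess4[OF homogeneous])

lemma two_distinct_lines_if_wronskian:
  assumes two: "(2::'a) \<noteq> 0" and W: "poly (wronskian (grad_poly i) (grad_poly j)) x \<noteq> 0"
  shows "two_distinct_lines f (point x)"
proof -
  let ?g = "grad4 f (point x)" and ?H = "hess4 f (point x)"
  define n where "n = (\<lambda>l. ?g i * unit4 j l + (- ?g j) * unit4 i l)"
  have "lin_form ?g n = 0" unfolding n_def lin_form_lin lin_form_unit4 by simp
  moreover have "bilin_form ?H b n \<noteq> 0"
    using W unfolding n_def bilin_form_lin_right
    by (simp add: wronskian_def poly_grad_poly poly_pderiv_grad_poly algebra_simps)
  moreover have "?g \<noteq> (\<lambda>_. 0)" using grad_point_nonzero[of x] by auto
  ultimately have "union_of_two_lines {z. nonzero4 z \<and> lin_form ?g z = 0 \<and> bilin_form ?H z z = 0}"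
    by (intro plane_section_union_of_two_lines[OF two _ hess4_commute indep tangent_a tangent_b _
          hessian_bb _ hessian_point])
  then show ?thesis by (simp add: two_distinct_lines_iff_union_of_two_lines)
qed

lemma exists_nonzero_wronskian:
  assumes "2 \<le> d" and ch: "CHAR('a) = 0 \<or> d - 1 < CHAR('a)"
  shows "\<exists>i j. wronskian (grad_poly i) (grad_poly j) \<noteq> 0"
proof (rule ccontr)
  assume "\<not> ?thesis"
  then have W0: "wronskian (grad_poly i) (grad_poly j) = 0" for i j by blast
  have deg: "degree (grad_poly i) \<le> d - 1" for i
    unfolding grad_poly_def by (rule degree_line_restrict_le[OF homogeneous4_pderiv4[OF homogeneous]])
  have "nonzero4 b" "eval4 f b = 0"
    using nonzero4_lin_comb[OF indep, of 0 1] vanishes_on_line[of 0 1] by simp_all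
  then obtain i0 where "eval4 (pderiv4 i0 f) b \<noteq> 0" using smooth by (auto simp: smooth_surface_def)
  then have lead: "coeff (grad_poly i0) (d - 1) \<noteq> 0"
    unfolding grad_poly_def coeff_line_restrict[OF homogeneous4_pderiv4[OF homogeneous]] .
  then have "grad_poly i0 \<noteq> 0" by auto
  have "0 < degree (grad_poly i0)" using le_degree[OF lead] assms(1) by linarith
  then obtain x0 where x0: "poly (grad_poly i0) x0 = 0" using alg_closed_imp_poly_has_root by blast
  have "grad4 f (point x0) k = 0" for k
  proof -
    obtain c where "grad_poly k = smult c (grad_poly i0)"
      using wronskian_eq_0_imp_proportional[OF deg deg ch W0 \<open>grad_poly i0 \<noteq> 0\<close>] by blast
    then show ?thesis using x0 by (simp flip: poly_grad_poly)
  qed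
  then show False using grad_point_nonzero by blast
qed

end

section \<open>Points of the line up to scaling\<close>

lemma proj_pt_scale:
  fixes v :: "4 \<Rightarrow> 'a::field"
  assumes "c \<noteq> 0"
  shows "proj_pt (\<lambda>i. c * v i) = proj_pt v"
proof -
  have "(\<exists>e. e \<noteq> 0 \<and> w = (\<lambda>i. e * (c * v i))) \<longleftrightarrow> (\<exists>e. e \<noteq> 0 \<and> w = (\<lambda>i. e * v i))" for w
  proof
    assume "\<exists>e. e \<noteq> 0 \<and> w = (\<lambda>i. e * (c * v i))"
    then show "\<exists>e. e \<noteq> 0 \<and> w = (\<lambda>i. e * v i)"
      using assms by (metis (no_types, lifting) ext mult.assoc mult_eq_0_iff)
  next
    assume "\<exists>e. e \<noteq> 0 \<and> w = (\<lambda>i. e * v i)"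
    then obtain e where "e \<noteq> 0" "w = (\<lambda>i. e * v i)" by blast
    then have "e / c \<noteq> 0 \<and> w = (\<lambda>i. e / c * (c * v i))" using assms by simp
    then show "\<exists>e. e \<noteq> 0 \<and> w = (\<lambda>i. e * (c * v i))" by blast
  qed
  then show ?thesis unfolding proj_pt_def by blast
qed

lemma two_distinct_lines_scale:
  fixes f :: "'a::field mpoly4"
  assumes h: "homogeneous4 d f" and "c \<noteq> 0"
  shows "two_distinct_lines f (\<lambda>i. c * P i) \<longleftrightarrow> two_distinct_lines f P"
proof -
  have "grad4 f (\<lambda>i. c * P i) = (\<lambda>i. c ^ (d - 1) * grad4 f P i)"
    by (simp add: fun_eq_iff grad4_def eval4_scale[OF homogeneous4_pderiv4[OF h]])
  moreover have "hess4 f (\<lambda>i. c * P i) = (\<lambda>i j. c ^ (d - 1 - 1) * hess4 f P i j)"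
    by (simp add: fun_eq_iff hess4_def eval4_scale[OF homogeneous4_pderiv4[OF homogeneous4_pderiv4[OF h]]])
  ultimately show ?thesis
    using \<open>c \<noteq> 0\<close> by (simp add: two_distinct_lines_iff_union_of_two_lines lin_form_scale bilin_form_scale)
qed

lemma proj_pts_line_cone_subset:
  fixes a b :: "4 \<Rightarrow> 'a::field"
  assumes "\<And>c P. c \<noteq> 0 \<Longrightarrow> \<Phi> (\<lambda>i. c * P i) \<longleftrightarrow> \<Phi> P"
  shows "{proj_pt P | P. P \<in> line_cone a b \<and> \<not> \<Phi> P} \<subseteq>
    insert (proj_pt b) ((\<lambda>x. proj_pt (\<lambda>i. a i + x * b i)) ` {x. \<not> \<Phi> (\<lambda>i. a i + x * b i)})"
proof
  fix X assume "X \<in> {proj_pt P | P. P \<in> line_cone a b \<and> \<not> \<Phi> P}"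
  then obtain s t where nz: "nonzero4 (\<lambda>i. s * a i + t * b i)" and X: "X = proj_pt (\<lambda>i. s * a i + t * b i)"
    and not\<Phi>: "\<not> \<Phi> (\<lambda>i. s * a i + t * b i)"
    unfolding line_cone_def by blast
  show "X \<in> insert (proj_pt b) ((\<lambda>x. proj_pt (\<lambda>i. a i + x * b i)) ` {x. \<not> \<Phi> (\<lambda>i. a i + x * b i)})"
  proof (cases "s = 0")
    case True
    then have "t \<noteq> 0" using nz by (auto simp: nonzero4_def)
    then show ?thesis using X True proj_pt_scale[of t b] by simp
  next
    case False
    have st: "(\<lambda>i. s * a i + t * b i) = (\<lambda>i. s * (a i + t / s * b i))"
      using False by (simp add: fun_eq_iff algebra_simps)
    then have "X = proj_pt (\<lambda>i. a i + t / s * b i)" "\<not> \<Phi> (\<lambda>i. a i + t / s * b i)"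
      using X not\<Phi> proj_pt_scale[OF False] assms[OF False] by simp_all
    then show ?thesis by blast
  qed
qed

theorem lemma2p6:
  fixes f :: "'a::alg_closed_field mpoly4" and d :: nat and a b :: "4 \<Rightarrow> 'a"
  assumes "d \<ge> 3"
    and "CHAR('a) = 0 \<or> CHAR('a) > d"
    and "f \<noteq> (\<lambda>_. 0)"
    and "homogeneous4 d f"
    and "smooth_surface f"
    and "lin_indep2 a b"
    and "\<forall>s t. eval4 f (\<lambda>i. s * a i + t * b i) = 0"
  shows "finite {proj_pt P | P. P \<in> line_cone a b \<and> \<not> two_distinct_lines f P}"
proof -
  interpret smooth_surface_line f d a b
    using assms(4-7) by unfold_locales auto
  have two: "(2::'a) \<noteq> 0"
    using of_nat_eq_iff_below_CHAR[of d 2 0] assms(1,2) by auto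
  obtain i j where W: "wronskian (grad_poly i) (grad_poly j) \<noteq> 0"
    using exists_nonzero_wronskian assms(1,2) by fastforce
  have "{x. \<not> two_distinct_lines f (point x)} \<subseteq> {x. poly (wronskian (grad_poly i) (grad_poly j)) x = 0}"
    using two_distinct_lines_if_wronskian[OF two] by blast
  then have "finite {x. \<not> two_distinct_lines f (point x)}"
    using poly_roots_finite[OF W] by (rule finite_subset)
  then show ?thesis
    using proj_pts_line_cone_subset[of "two_distinct_lines f" a b] two_distinct_lines_scale[OF assms(4)]
    by (meson finite_imageI finite_insert finite_subset)
qed

end
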